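(* Let $c>0$. The planar system $$\dot x=x(1-y+cx),\qquad \dot y=y(-1+x)$$ has no formal first integrals.
   Context: A formal first integral is a non-constant formal power series $f\in\mathbb{C}[[x,y]]$ with $x(1-y+cx)\partial_x f+y(-1+x)\partial_y f=0$. *)

theory Defs
  imports Complex_Main
begin

text \<open>A formal power series in two variables x, y over the complex numbers, represented
  by its coefficient function: f i j is the coefficient of x^i y^j.\<close>
type_synonym fps2 = "nat \<Rightarrow> nat \<Rightarrow> complex"

definition fps2_dx :: "fps2 \<Rightarrow> fps2" where
  "fps2_dx f = (\<lambda>i j. of_nat (Suc i) * f (Suc i) j)"

definition fps2_dy :: "fps2 \<Rightarrow> fps2" where
  "fps2_dy f = (\<lambda>i j. of_nat (Suc j) * f i (Suc j))"

definition fps2_mult_x :: "fps2 \<Rightarrow> fps2" where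
  "fps2_mult_x f = (\<lambda>i j. if i = 0 then 0 else f (i - 1) j)"

definition fps2_mult_y :: "fps2 \<Rightarrow> fps2" where
  "fps2_mult_y f = (\<lambda>i j. if j = 0 then 0 else f i (j - 1))"

definition fps2_const :: "complex \<Rightarrow> fps2" where
  "fps2_const a = (\<lambda>i j. if i = 0 \<and> j = 0 then a else 0)"

text \<open>The derivation x(1 - y + c x) d/dx + y(-1 + x) d/dy applied to f, written out
  coefficientwise as x f_x - y (x f_x) + c x (x f_x) - y f_y + x (y f_y).\<close>
definition vf_apply :: "complex \<Rightarrow> fps2 \<Rightarrow> fps2" where
  "vf_apply c f = (\<lambda>i j.
      fps2_mult_x (fps2_dx f) i j
    - fps2_mult_y (fps2_mult_x (fps2_dx f)) i j
    + c * fps2_mult_x (fps2_mult_x (fps2_dx f)) i j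
    - fps2_mult_y (fps2_dy f) i j
    + fps2_mult_x (fps2_mult_y (fps2_dy f)) i j)"

definition formal_first_integral :: "complex \<Rightarrow> fps2 \<Rightarrow> bool" where
  "formal_first_integral c f \<longleftrightarrow>
     (\<forall>a. f \<noteq> fps2_const a) \<and> (\<forall>i j. vf_apply c f i j = 0)"

end

theory Submission
  imports Defs
begin

(* In coefficients, the equation reads
     (i - j) f(i,j) = i f(i,j-1) - (c (i-1) + j) f(i-1,j),
   so the linear part x d/dx - y d/dy leaves only the resonant monomials (xy)^n free:
   the lowest-degree non-constant part of a first integral is a (xy)^n with a <> 0, n >= 1.
   The recursion then fixes the coefficients of x^(n+1) y^n and x^n y^(n+1) as
   -(c+1) n a and -n a, and the resonant equation at (xy)^(n+1) collapses to c n a = 0. *)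

lemma vf_apply_coeff:
  "vf_apply c f i j = (of_nat i - of_nat j) * f i j
     - (if j = 0 then 0 else of_nat i * f i (j - 1))
     + (if i = 0 then 0 else (c * of_nat (i - 1) + of_nat j) * f (i - 1) j)"
  by (cases i; cases j)
     (auto simp: vf_apply_def fps2_mult_x_def fps2_mult_y_def fps2_dx_def fps2_dy_def
        algebra_simps)

lemma nonconstant_fps2_lowest_degree:
  assumes "\<And>a. f \<noteq> fps2_const a"
  obtains d i j where "1 \<le> d" "i + j = d" "f i j \<noteq> 0"
    and "\<And>i j. 1 \<le> i + j \<Longrightarrow> i + j < d \<Longrightarrow> f i j = 0"
proof -
  let ?P = "\<lambda>d. 1 \<le> d \<and> (\<exists>i j. i + j = d \<and> f i j \<noteq> 0)"
  have "\<exists>d. ?P d"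
  proof (rule ccontr)
    assume "\<nexists>d. ?P d"
    then have "f i j = 0" if "1 \<le> i + j" for i j
      using that by blast
    then have "f = fps2_const (f 0 0)"
      by (intro ext) (auto simp: fps2_const_def)
    with assms show False by blast
  qed
  then have "?P (LEAST d. ?P d)"
    by (rule LeastI_ex)
  moreover have "f i j = 0" if "1 \<le> i + j" "i + j < (LEAST d. ?P d)" for i j
    using not_less_Least[OF that(2)] that(1) by blast
  ultimately show thesis
    using that by blast
qed

lemma lowest_degree_coeff_off_diagonal:
  assumes annihilated: "\<And>i j. vf_apply c f i j = 0"
    and lower: "\<And>i j. 1 \<le> i + j \<Longrightarrow> i + j < d \<Longrightarrow> f i j = 0"
    and "i + j = d" "i \<noteq> j"
  shows "f i j = 0"
proof -
  have "(if j = 0 then 0 else of_nat i * f i (j - 1)) = 0"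
    using lower[of i "j - 1"] assms(3) by (cases "i = 0 \<or> j = 0") auto
  moreover have "(if i = 0 then 0 else (c * of_nat (i - 1) + of_nat j) * f (i - 1) j) = 0"
  proof -
    have "f (i - 1) j = 0" if "i \<noteq> 0" "\<not> (i = 1 \<and> j = 0)"
      using that assms(3) by (intro lower) arith+
    then show ?thesis
      by (cases "i = 1 \<and> j = 0") auto
  qed
  ultimately have "(of_nat i - of_nat j) * f i j = 0"
    using annihilated[of i j] by (simp add: vf_apply_coeff)
  moreover have "(of_nat i - of_nat j :: complex) \<noteq> 0"
    using \<open>i \<noteq> j\<close> by simp
  ultimately show ?thesis
    by simp
qed

lemma diagonal_coeff_vanishes:
  assumes annihilated: "\<And>i j. vf_apply c f i j = 0"
    and "c \<noteq> 0"
    and below_right: "f (Suc (Suc m)) m = 0"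
    and above_left: "f m (Suc (Suc m)) = 0"
  shows "f (Suc m) (Suc m) = 0"
proof -
  define n :: complex where "n = of_nat (Suc m)"
  define a where "a = f (Suc m) (Suc m)"
  have "f (Suc (Suc m)) (Suc m) + (c + 1) * n * a = 0"
    using annihilated[of "Suc (Suc m)" "Suc m"] below_right
    by (simp add: vf_apply_coeff n_def a_def algebra_simps)
  then have right: "f (Suc (Suc m)) (Suc m) = - ((c + 1) * n * a)"
    by (simp add: add_eq_0_iff2)
  have "- f (Suc m) (Suc (Suc m)) = n * a"
    using annihilated[of "Suc m" "Suc (Suc m)"] above_left
    by (simp add: vf_apply_coeff n_def a_def algebra_simps)
  then have up: "f (Suc m) (Suc (Suc m)) = - (n * a)"
    by (simp add: minus_equation_iff)
  have "(c * n + n + 1) * f (Suc m) (Suc (Suc m)) = (n + 1) * f (Suc (Suc m)) (Suc m)"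
    using annihilated[of "Suc (Suc m)" "Suc (Suc m)"]
    by (simp add: vf_apply_coeff n_def algebra_simps)
  then have "c * n * a = 0"
    unfolding right up by (simp add: algebra_simps)
  moreover have "n \<noteq> 0"
    unfolding n_def by (rule of_nat_neq_0)
  ultimately show ?thesis
    using \<open>c \<noteq> 0\<close> by (simp add: a_def)
qed

theorem proposition3p3:
  fixes c :: real
  assumes "c > 0"
  shows "\<not> (\<exists>f. formal_first_integral (complex_of_real c) f)"
proof
  assume "\<exists>f. formal_first_integral (complex_of_real c) f"
  then obtain f where nonconstant: "\<And>a. f \<noteq> fps2_const a"
    and annihilated: "\<And>i j. vf_apply (complex_of_real c) f i j = 0"
    unfolding formal_first_integral_def by blast
  obtain d i j where "1 \<le> d" "i + j = d" "f i j \<noteq> 0"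
    and lower: "\<And>i j. 1 \<le> i + j \<Longrightarrow> i + j < d \<Longrightarrow> f i j = 0"
    using nonconstant_fps2_lowest_degree[OF nonconstant] by blast
  note off_diagonal = lowest_degree_coeff_off_diagonal[OF annihilated lower]
  have "i = j"
    using off_diagonal \<open>i + j = d\<close> \<open>f i j \<noteq> 0\<close> by blast
  then obtain m where m: "i = Suc m" "j = Suc m"
    using \<open>1 \<le> d\<close> \<open>i + j = d\<close> by (cases i) auto
  have "f (Suc (Suc m)) m = 0" "f m (Suc (Suc m)) = 0"
    using \<open>i + j = d\<close> m by (auto intro!: off_diagonal)
  with \<open>c > 0\<close> have "f (Suc m) (Suc m) = 0"
    by (intro diagonal_coeff_vanishes[OF annihilated]) auto
  with \<open>f i j \<noteq> 0\<close> m show False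
    by simp
qed

end
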